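(* Fix a formula $A$ and an annotated unary context $\Gamma\{-\}$. If $\vdash^A \Gamma\{\Diamond A^\perp_\emptyset\}$, then $\vdash^A \Gamma\{\}$.
   Context: Formulas: over a countable set of atoms $\alpha$ with duals $\alpha^\perp$, $A,B ::= \alpha \mid \alpha^\perp \mid A\land B \mid A\lor B \mid \Box A \mid \Diamond A$; negation $A^\perp$ by De Morgan duality ($(\alpha)^\perp=\alpha^\perp$, $(\alpha^\perp)^\perp=\alpha$, $\land/\lor$ dual, $(\Box A)^\perp=\Diamond A^\perp$, $(\Diamond A)^\perp=\Box A^\perp$). Annotated sequents: $\Gamma,\Delta ::= \cdot \mid \Gamma, C \mid \Gamma, \Diamond A_\Sigma \mid \Gamma,[\Delta]_B$, where $C$ is a formula not of the form $\Diamond A$, $\Sigma$ is a finite set of formulas (annotation set) and $B$ a formula (bracket annotation); sequents are taken up to exchange. Annotated unary contexts $\Gamma\{-\}$ (one hole) are defined analogously, $\Gamma\{\Delta\}$ is hole-filling, $\Gamma\{\}=\Gamma\{\cdot\}$. Annotated rules (whenever an active formula in a premise is a $\Diamond$-formula, its annotation is simply discarded): (id) $\Gamma\{\alpha^\perp,\alpha\}$, provided every $\Diamond$-formula occurrence in it has annotation $\emptyset$; ($\land$) from $\Gamma_1\{A\}$ and $\Gamma_2\{B\}$ infer $\Gamma\{A\land B\}$; ($\lor$) from $\Gamma\{A,B\}$ infer $\Gamma\{A\lor B\}$; ($\Box$) from $\Gamma\{[\Diamond A^\perp_\Sigma, A]_A\}$ infer $\Gamma\{\Box A\}$; ($\Diamond$)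 from $\Gamma\{\Delta\{[\Delta',A]_B\},\Diamond A_\Sigma\}$ infer $\Gamma\{\Delta\{[\Delta']_B\},\Diamond A_{\Sigma\cup\{B\}}\}$ (for any unary context $\Delta\{-\}$, possibly of depth $0$); (cut) from $\Gamma_1\{A\}$ and $\Gamma_2\{A^\perp\}$ infer $\Gamma\{\}$. In the two-premise rules, $\Gamma_1\{-\},\Gamma_2\{-\},\Gamma\{-\}$ are identical except for annotation sets of $\Diamond$-formula occurrences (bracket annotations coincide), and each $\Diamond$-formula occurrence in $\Gamma\{-\}$ has as annotation the union of the annotations of the corresponding occurrences in $\Gamma_1,\Gamma_2$. Fix a formula $A$; $\vdash^A\Gamma$ means the annotated sequent $\Gamma$ is derivable with the annotated rules (id), ($\land$), ($\lor$), ($\Box$), ($\Diamond$) together with those instances of (cut) whose cut formula is $A$. Convention: annotations not displayed in a statement (on $\Diamond$-formulas or brackets) are arbitrary; bracket annotations are the same in hypothesis and conclusion, while undisplayed $\Diamond$-annotations in the conclusion are existentially quantified. *)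

theory Defs
  imports Main "HOL-Library.Multiset" "HOL-Library.FSet"
begin

text \<open>Formulas over atoms (natural numbers) and their duals, in negation normal form.\<close>
datatype fm = At nat | NAt nat | And fm fm | Or fm fm | Box fm | Dia fm

primrec neg :: "fm \<Rightarrow> fm" where
  "neg (At a) = NAt a"
| "neg (NAt a) = At a"
| "neg (And A B) = Or (neg A) (neg B)"
| "neg (Or A B) = And (neg A) (neg B)"
| "neg (Box A) = Dia (neg A)"
| "neg (Dia A) = Box (neg A)"

text \<open>Items of annotated sequents: a formula C not of the form Dia A (Fm C),
  an annotated diamond formula Dia A with annotation Sigma (Di A Sigma), or a bracket
  [Delta]_B (Br Delta B).  Annotated sequents are multisets of items (exchange).\<close>
datatype item = Fm fm | Di fm "fm fset" | Br "item multiset" fm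

type_synonym seq = "item multiset"

primrec wf_item :: "item \<Rightarrow> bool" where
  "wf_item (Fm C) = (\<forall>B. C \<noteq> Dia B)"
| "wf_item (Di A S) = True"
| "wf_item (Br M B) = (\<forall>b\<in>set_mset (image_mset wf_item M). b)"

primrec empty_ann :: "item \<Rightarrow> bool" where
  "empty_ann (Fm C) = True"
| "empty_ann (Di A S) = (S = {||})"
| "empty_ann (Br M B) = (\<forall>b\<in>set_mset (image_mset empty_ann M). b)"

text \<open>Erase all Dia-annotations (used to compare sequents up to Dia-annotations).\<close>
primrec erase :: "item \<Rightarrow> item" where
  "erase (Fm C) = Fm C"
| "erase (Di A S) = Di A {||}"
| "erase (Br M B) = Br (image_mset erase M) B"

text \<open>Annotated unary contexts: Hole M is  M, {-} ; InBr M c B is  M, [c{-}]_B.\<close>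
datatype ctx = Hole seq | InBr seq ctx fm

primrec fill :: "ctx \<Rightarrow> seq \<Rightarrow> seq" where
  "fill (Hole M) X = M + X"
| "fill (InBr M c B) X = M + {# Br (fill c X) B #}"

primrec erase_ctx :: "ctx \<Rightarrow> ctx" where
  "erase_ctx (Hole M) = Hole (image_mset erase M)"
| "erase_ctx (InBr M c B) = InBr (image_mset erase M) (erase_ctx c) B"

text \<open>x represents formula A as an item in a premise (Dia-annotation arbitrary).\<close>
definition rep :: "fm \<Rightarrow> item \<Rightarrow> bool" where
  "rep A x = (case A of Dia B \<Rightarrow> (\<exists>S. x = Di B S) | _ \<Rightarrow> x = Fm A)"

inductive merge_item :: "item \<Rightarrow> item \<Rightarrow> item \<Rightarrow> bool"
  and merge_ms :: "seq \<Rightarrow> seq \<Rightarrow> seq \<Rightarrow> bool" where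
  "merge_item (Fm C) (Fm C) (Fm C)"
| "merge_item (Di A S1) (Di A S2) (Di A (S1 |\<union>| S2))"
| "merge_ms M1 M2 M \<Longrightarrow> merge_item (Br M1 B) (Br M2 B) (Br M B)"
| "merge_ms {#} {#} {#}"
| "merge_item x1 x2 x \<Longrightarrow> merge_ms M1 M2 M \<Longrightarrow>
     merge_ms (add_mset x1 M1) (add_mset x2 M2) (add_mset x M)"

inductive merge_ctx :: "ctx \<Rightarrow> ctx \<Rightarrow> ctx \<Rightarrow> bool" where
  "merge_ms M1 M2 M \<Longrightarrow> merge_ctx (Hole M1) (Hole M2) (Hole M)"
| "merge_ms M1 M2 M \<Longrightarrow> merge_ctx c1 c2 c \<Longrightarrow>
     merge_ctx (InBr M1 c1 B) (InBr M2 c2 B) (InBr M c B)"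

inductive deriv :: "fm \<Rightarrow> seq \<Rightarrow> bool" for CA :: fm where
  ax: "\<forall>x\<in>set_mset (fill G {# Fm (NAt a), Fm (At a) #}). wf_item x \<Longrightarrow>
       \<forall>x\<in>set_mset (fill G {# Fm (NAt a), Fm (At a) #}). empty_ann x \<Longrightarrow>
       deriv CA (fill G {# Fm (NAt a), Fm (At a) #})"
| conj: "merge_ctx G1 G2 G \<Longrightarrow> rep A x \<Longrightarrow> rep B y \<Longrightarrow>
       deriv CA (fill G1 {#x#}) \<Longrightarrow> deriv CA (fill G2 {#y#}) \<Longrightarrow>
       deriv CA (fill G {# Fm (And A B) #})"
| disj: "rep A x \<Longrightarrow> rep B y \<Longrightarrow> deriv CA (fill G {#x, y#}) \<Longrightarrow>
       deriv CA (fill G {# Fm (Or A B) #})"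
| box: "rep A x \<Longrightarrow> deriv CA (fill G {# Br {# Di (neg A) S, x #} A #}) \<Longrightarrow>
       deriv CA (fill G {# Fm (Box A) #})"
| dia: "rep A x \<Longrightarrow>
       deriv CA (fill G (add_mset (Di A S) (fill D {# Br (add_mset x M) B #}))) \<Longrightarrow>
       deriv CA (fill G (add_mset (Di A (finsert B S)) (fill D {# Br M B #})))"
| cut: "merge_ctx G1 G2 G \<Longrightarrow> rep CA x \<Longrightarrow> rep (neg CA) y \<Longrightarrow>
       deriv CA (fill G1 {#x#}) \<Longrightarrow> deriv CA (fill G2 {#y#}) \<Longrightarrow>
       deriv CA (fill G {#})"

end

theory Submission
  imports Defs
begin

text \<open>Deleting diamond formulas with empty annotation, anywhere in a sequent, preserves
  derivability. Such an occurrence is never principal: the (\<open>\<Diamond>\<close>) rule leaves a nonempty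
  annotation on its principal formula, and the annotation of an occurrence in the conclusion of a
  two-premise rule is the union of those in the premises, so it is empty only if both are. Hence
  the deletion can be pushed through every rule instance up to the axioms, whose side conditions
  it preserves. The theorem deletes the displayed formula and keeps the context unchanged.\<close>

lemma mset_add_eq_add_split:
  fixes K L M N :: "'a multiset"
  assumes "K + L = M + N"
  shows "\<exists>K1 K2 L1 L2. K = K1 + K2 \<and> L = L1 + L2 \<and> M = K1 + L1 \<and> N = K2 + L2"
proof (intro exI conjI)
  have count_eq: "count K x + count L x = count M x + count N x" for x
    using assms by (metis count_union)
  show "K = K \<inter># M + (K - M)" "M = K \<inter># M + (M - K)"
    by (rule multiset_eqI, simp)+
  have "count L x = count (M - K + (L - (M - K))) x"
    and "count N x = count (K - M + (L - (M - K))) x" for x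
    using count_eq[of x] by auto
  then show "L = (M - K) + (L - (M - K))" "N = (K - M) + (L - (M - K))"
    by (blast intro: multiset_eqI)+
qed

lemma rel_mset_union: "rel_mset R A B \<Longrightarrow> rel_mset R C D \<Longrightarrow> rel_mset R (A + C) (B + D)"
  by (induction rule: rel_mset_induct) (auto intro: rel_mset_Plus)

lemma rel_mset_union_split:
  "rel_mset R (L1 + L2) N \<Longrightarrow> \<exists>N1 N2. N = N1 + N2 \<and> rel_mset R L1 N1 \<and> rel_mset R L2 N2"
proof (induction L1 arbitrary: N)
  case empty
  then show ?case by (metis add_0 rel_mset_Zero)
next
  case (add a L1)
  then obtain b N0 where "N = add_mset b N0" "R a b" "rel_mset R (L1 + L2) N0"
    using msed_rel_invL by (metis union_mset_add_mset_left)
  with add.IH show ?case by (metis rel_mset_Plus union_mset_add_mset_left)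
qed

lemma rel_mset_backward: "rel_mset R L N \<Longrightarrow> y \<in># N \<Longrightarrow> \<exists>x\<in>#L. R x y"
  by (induction rule: rel_mset_induct) auto

definition empty_dia :: "item \<Rightarrow> bool" where
  "empty_dia x \<longleftrightarrow> (\<exists>A. x = Di A {||})"

lemma empty_dia_simps [simp]:
  "\<not> empty_dia (Fm C)" "empty_dia (Di A S) \<longleftrightarrow> S = {||}" "\<not> empty_dia (Br M B)"
  by (auto simp: empty_dia_def)

inductive prune_item :: "item \<Rightarrow> item \<Rightarrow> bool" where
  "prune_item (Fm C) (Fm C)"
| "prune_item (Di A S) (Di A S)"
| "M = K + L \<Longrightarrow> \<forall>x\<in>#K. empty_dia x \<Longrightarrow> rel_mset prune_item L N \<Longrightarrow>
     prune_item (Br M B) (Br N B)"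
monos multiset.rel_mono

definition prune :: "seq \<Rightarrow> seq \<Rightarrow> bool" where
  "prune M N \<longleftrightarrow> (\<exists>K L. M = K + L \<and> (\<forall>x\<in>#K. empty_dia x) \<and> rel_mset prune_item L N)"

lemma prune_item_Fm_iff [simp]: "prune_item (Fm C) y \<longleftrightarrow> y = Fm C"
  by (auto elim!: prune_item.cases intro: prune_item.intros)

lemma prune_item_Di_iff [simp]: "prune_item (Di A S) y \<longleftrightarrow> y = Di A S"
  by (auto elim!: prune_item.cases intro: prune_item.intros)

lemma prune_item_Br_iff [simp]: "prune_item (Br M B) y \<longleftrightarrow> (\<exists>N. y = Br N B \<and> prune M N)"
  by (auto simp: prune_def elim!: prune_item.cases intro: prune_item.intros)

lemma prune_item_refl: "prune_item x x"
proof (induction x)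
  case (Br M B)
  then have "rel_mset prune_item M M" by (simp add: multiset.rel_refl_strong)
  then show ?case using prune_item.intros(3)[of M "{#}"] by simp
qed simp_all

lemma prune_refl: "prune M M"
  unfolding prune_def
  by (intro exI[of _ "{#}"] exI[of _ M]) (auto intro: multiset.rel_refl_strong prune_item_refl)

lemma prune_empty_iff [simp]: "prune {#} Y \<longleftrightarrow> Y = {#}"
  by (auto simp: prune_def prune_refl)

lemma prune_union: "prune A B \<Longrightarrow> prune C D \<Longrightarrow> prune (A + C) (B + D)"
proof -
  assume "prune A B" "prune C D"
  then obtain K L K' L' where "A = K + L" "\<forall>x\<in>#K. empty_dia x" "rel_mset prune_item L B"
    "C = K' + L'" "\<forall>x\<in>#K'. empty_dia x" "rel_mset prune_item L' D"
    unfolding prune_def by blast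
  then show ?thesis unfolding prune_def
    by (intro exI[of _ "K + K'"] exI[of _ "L + L'"]) (auto simp: rel_mset_union)
qed

lemma prune_union_split: "prune (M + N) Y \<Longrightarrow> \<exists>Y1 Y2. Y = Y1 + Y2 \<and> prune M Y1 \<and> prune N Y2"
proof -
  assume "prune (M + N) Y"
  then obtain K L where KL: "M + N = K + L" "\<forall>x\<in>#K. empty_dia x" "rel_mset prune_item L Y"
    unfolding prune_def by blast
  then obtain K1 K2 L1 L2 where split: "K = K1 + K2" "L = L1 + L2" "M = K1 + L1" "N = K2 + L2"
    using mset_add_eq_add_split[of M N K L] by metis
  then obtain Y1 Y2 where Y: "Y = Y1 + Y2" "rel_mset prune_item L1 Y1" "rel_mset prune_item L2 Y2"
    using rel_mset_union_split KL(3) by blast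
  have "prune M Y1"
    unfolding prune_def using split KL(2) Y(2) by (intro exI[of _ K1] exI[of _ L1]) auto
  moreover have "prune N Y2"
    unfolding prune_def using split KL(2) Y(3) by (intro exI[of _ K2] exI[of _ L2]) auto
  ultimately show ?thesis using Y(1) by blast
qed

lemma prune_add_mset_iff:
  "prune (add_mset x M) Y \<longleftrightarrow>
     (\<exists>y Y'. Y = add_mset y Y' \<and> prune_item x y \<and> prune M Y') \<or> (empty_dia x \<and> prune M Y)"
    (is "_ \<longleftrightarrow> ?kept \<or> ?deleted")
proof
  assume "prune (add_mset x M) Y"
  then obtain K L where KL: "add_mset x M = K + L" "\<forall>x\<in>#K. empty_dia x" "rel_mset prune_item L Y"
    unfolding prune_def by blast
  show "?kept \<or> ?deleted"
  proof (cases "x \<in># K")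
    case True
    then obtain K' where K: "K = add_mset x K'" by (meson multi_member_split)
    with KL(1) have "M = K' + L" by simp
    with KL(2,3) K have "prune M Y" unfolding prune_def by auto
    moreover from KL(2) K have "empty_dia x" by simp
    ultimately show ?thesis by blast
  next
    case False
    with KL(1) have "x \<in># L" by (metis union_iff union_single_eq_member)
    then obtain L' where L: "L = add_mset x L'" by (meson multi_member_split)
    with KL(1) have M: "M = K + L'" by simp
    from KL(3) have "rel_mset prune_item (add_mset x L') Y" unfolding L .
    then obtain y Y' where "Y = add_mset y Y'" "prune_item x y" "rel_mset prune_item L' Y'"
      by (blast dest: msed_rel_invL)
    moreover have "prune M Y'" unfolding prune_def using KL(2) M calculation(3) by blast
    ultimately show ?thesis by blast
  qed
next
  assume "?kept \<or> ?deleted"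
  then show "prune (add_mset x M) Y"
  proof
    assume ?kept
    then obtain y Y' K L where "Y = add_mset y Y'" "prune_item x y" "M = K + L"
      "\<forall>x\<in>#K. empty_dia x" "rel_mset prune_item L Y'"
      unfolding prune_def by blast
    then show ?thesis unfolding prune_def
      by (intro exI[of _ K] exI[of _ "add_mset x L"]) (auto intro: rel_mset_Plus)
  next
    assume ?deleted
    then obtain K L where "empty_dia x" "M = K + L" "\<forall>x\<in>#K. empty_dia x" "rel_mset prune_item L Y"
      unfolding prune_def by blast
    then show ?thesis unfolding prune_def
      by (intro exI[of _ "add_mset x K"] exI[of _ L]) auto
  qed
qed

lemma prune_add_mset: "prune_item x y \<Longrightarrow> prune M N \<Longrightarrow> prune (add_mset x M) (add_mset y N)"
  unfolding prune_add_mset_iff by blast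

lemma prune_add_mset_Fm_iff [simp]:
  "prune (add_mset (Fm C) M) Y \<longleftrightarrow> (\<exists>Y'. Y = add_mset (Fm C) Y' \<and> prune M Y')"
  by (simp add: prune_add_mset_iff)

lemma prune_item_wf_item: "prune_item x y \<Longrightarrow> wf_item x \<Longrightarrow> wf_item y"
proof (induction rule: prune_item.induct)
  case (3 M K L N B)
  have "wf_item y" if y: "y \<in># N" for y
  proof -
    obtain x where "x \<in># L" "wf_item x \<longrightarrow> wf_item y"
      using rel_mset_backward[OF "3.IH" y] by blast
    with "3.hyps"(1) "3.prems" show ?thesis by auto
  qed
  then show ?case by simp
qed simp_all

lemma prune_item_empty_ann: "prune_item x y \<Longrightarrow> empty_ann x \<Longrightarrow> empty_ann y"
proof (induction rule: prune_item.induct)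
  case (3 M K L N B)
  have "empty_ann y" if y: "y \<in># N" for y
  proof -
    obtain x where "x \<in># L" "empty_ann x \<longrightarrow> empty_ann y"
      using rel_mset_backward[OF "3.IH" y] by blast
    with "3.hyps"(1) "3.prems" show ?thesis by auto
  qed
  then show ?case by simp
qed simp_all

lemma prune_backward: "prune M N \<Longrightarrow> y \<in># N \<Longrightarrow> \<exists>x\<in>#M. prune_item x y"
  unfolding prune_def by (metis rel_mset_backward union_iff)

lemma prune_wf_items: "prune M N \<Longrightarrow> \<forall>x\<in>#M. wf_item x \<Longrightarrow> \<forall>y\<in>#N. wf_item y"
  by (meson prune_backward prune_item_wf_item)

lemma prune_empty_anns: "prune M N \<Longrightarrow> \<forall>x\<in>#M. empty_ann x \<Longrightarrow> \<forall>y\<in>#N. empty_ann y"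
  by (meson prune_backward prune_item_empty_ann)

primrec prune_ctx :: "ctx \<Rightarrow> ctx \<Rightarrow> bool" where
  "prune_ctx (Hole M) G' \<longleftrightarrow> (\<exists>N. G' = Hole N \<and> prune M N)"
| "prune_ctx (InBr M c B) G' \<longleftrightarrow> (\<exists>N c'. G' = InBr N c' B \<and> prune M N \<and> prune_ctx c c')"

lemma prune_ctx_refl: "prune_ctx G G"
  by (induction G) (auto intro: prune_refl)

lemma prune_fill: "prune_ctx G G' \<Longrightarrow> prune X X' \<Longrightarrow> prune (fill G X) (fill G' X')"
proof (induction G arbitrary: G')
  case (Hole M)
  then show ?case by (auto intro: prune_union)
next
  case (InBr M c B)
  then obtain N c' where "G' = InBr N c' B" "prune M N" "prune (fill c X) (fill c' X')"
    by auto
  then show ?case by (simp add: prune_add_mset)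
qed

lemma prune_fill_split:
  "prune (fill G X) Y \<Longrightarrow> \<exists>G' X'. Y = fill G' X' \<and> prune_ctx G G' \<and> prune X X'"
proof (induction G arbitrary: Y)
  case (Hole M)
  then have "prune (M + X) Y" by simp
  then obtain Y1 Y2 where "Y = Y1 + Y2" "prune M Y1" "prune X Y2"
    using prune_union_split by blast
  then show ?case by (intro exI[of _ "Hole Y1"] exI[of _ Y2]) auto
next
  case (InBr M c B)
  then have "prune (M + {#Br (fill c X) B#}) Y" by simp
  then obtain Y1 Y2 where Y: "Y = Y1 + Y2" "prune M Y1" "prune {#Br (fill c X) B#} Y2"
    using prune_union_split by blast
  then obtain N where "Y2 = {#Br N B#}" "prune (fill c X) N"
    by (auto simp: prune_add_mset_iff)
  moreover from InBr.IH calculation(2) obtain c' X' where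
    "N = fill c' X'" "prune_ctx c c'" "prune X X'"
    by blast
  ultimately show ?case using Y by (intro exI[of _ "InBr Y1 c' B"] exI[of _ X']) auto
qed

lemma prune_fill_Fm:
  assumes "prune (fill G {#Fm C#}) Y"
  shows "\<exists>G'. Y = fill G' {#Fm C#} \<and> prune_ctx G G'"
proof -
  obtain G' X' where "Y = fill G' X'" "prune_ctx G G'" "prune {#Fm C#} X'"
    using prune_fill_split[OF assms] by blast
  then show ?thesis by auto
qed

lemma merge_item_empty_dia: "merge_item x1 x2 x \<Longrightarrow> empty_dia x \<Longrightarrow> empty_dia x1 \<and> empty_dia x2"
  by (erule merge_item.cases) auto

lemma merge_prune_mutual:
  "(merge_item x1 x2 x \<longrightarrow> (\<forall>y. prune_item x y \<longrightarrow>
      (\<exists>y1 y2. merge_item y1 y2 y \<and> prune_item x1 y1 \<and> prune_item x2 y2)))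
   \<and> (merge_ms M1 M2 M \<longrightarrow> (\<forall>N. prune M N \<longrightarrow>
      (\<exists>N1 N2. merge_ms N1 N2 N \<and> prune M1 N1 \<and> prune M2 N2)))"
proof (induction rule: merge_item_merge_ms.induct)
  case (3 M1 M2 M B)
  show ?case
  proof (intro allI impI)
    fix y assume "prune_item (Br M B) y"
    then obtain N where "y = Br N B" "prune M N" by auto
    moreover from "3.IH" calculation(2) obtain N1 N2 where
      "merge_ms N1 N2 N" "prune M1 N1" "prune M2 N2"
      by blast
    ultimately show "\<exists>y1 y2. merge_item y1 y2 y \<and> prune_item (Br M1 B) y1 \<and> prune_item (Br M2 B) y2"
      by (intro exI[of _ "Br N1 B"] exI[of _ "Br N2 B"]) (auto intro: merge_item_merge_ms.intros)
  qed
next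
  case (5 x1 x2 x M1 M2 M)
  show ?case
  proof (intro allI impI)
    fix N assume "prune (add_mset x M) N"
    then consider
        (kept) y N' where "N = add_mset y N'" "prune_item x y" "prune M N'"
      | (deleted) "empty_dia x" "prune M N"
      unfolding prune_add_mset_iff by blast
    then show "\<exists>N1 N2. merge_ms N1 N2 N \<and> prune (add_mset x1 M1) N1 \<and> prune (add_mset x2 M2) N2"
    proof cases
      case kept
      with "5.IH" obtain y1 y2 N1 N2 where "merge_item y1 y2 y" "prune_item x1 y1" "prune_item x2 y2"
        "merge_ms N1 N2 N'" "prune M1 N1" "prune M2 N2"
        by blast
      with kept show ?thesis
        by (intro exI[of _ "add_mset y1 N1"] exI[of _ "add_mset y2 N2"])
          (auto intro: prune_add_mset merge_item_merge_ms.intros)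
    next
      case deleted
      with "5.IH" obtain N1 N2 where "merge_ms N1 N2 N" "prune M1 N1" "prune M2 N2"
        by blast
      moreover have "empty_dia x1" "empty_dia x2"
        using merge_item_empty_dia "5.hyps"(1) deleted(1) by blast+
      ultimately show ?thesis
        by (intro exI[of _ N1] exI[of _ N2]) (simp add: prune_add_mset_iff)
    qed
  qed
qed (auto intro: merge_item_merge_ms.intros)

lemma merge_ms_prune:
  "merge_ms M1 M2 M \<Longrightarrow> prune M N \<Longrightarrow> \<exists>N1 N2. merge_ms N1 N2 N \<and> prune M1 N1 \<and> prune M2 N2"
  using merge_prune_mutual by blast

lemma merge_ctx_prune:
  "merge_ctx G1 G2 G \<Longrightarrow> prune_ctx G G' \<Longrightarrow>
     \<exists>G1' G2'. merge_ctx G1' G2' G' \<and> prune_ctx G1 G1' \<and> prune_ctx G2 G2'"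
proof (induction arbitrary: G' rule: merge_ctx.induct)
  case (1 M1 M2 M)
  then obtain N where "G' = Hole N" "prune M N" by auto
  moreover from "1.hyps" calculation(2) obtain N1 N2 where
    "merge_ms N1 N2 N" "prune M1 N1" "prune M2 N2"
    using merge_ms_prune by blast
  ultimately show ?case
    by (intro exI[of _ "Hole N1"] exI[of _ "Hole N2"]) (auto intro: merge_ctx.intros)
next
  case (2 M1 M2 M c1 c2 c B)
  then obtain N c' where "G' = InBr N c' B" "prune M N" "prune_ctx c c'" by auto
  moreover from "2.hyps"(1) calculation(2) obtain N1 N2 where
    "merge_ms N1 N2 N" "prune M1 N1" "prune M2 N2"
    using merge_ms_prune by blast
  moreover from "2.IH" calculation(3) obtain c1' c2' where
    "merge_ctx c1' c2' c'" "prune_ctx c1 c1'" "prune_ctx c2 c2'"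
    by blast
  ultimately show ?case
    by (intro exI[of _ "InBr N1 c1' B"] exI[of _ "InBr N2 c2' B"]) (auto intro: merge_ctx.intros)
qed

lemma deriv_prune: "deriv CA X \<Longrightarrow> prune X Y \<Longrightarrow> deriv CA Y"
proof (induction arbitrary: Y rule: deriv.induct)
  case (ax G a)
  obtain G' X' where "Y = fill G' X'" "prune {#Fm (NAt a), Fm (At a)#} X'"
    using prune_fill_split[OF ax.prems] by blast
  then have Y: "Y = fill G' {#Fm (NAt a), Fm (At a)#}" by auto
  have "\<forall>y\<in>#Y. wf_item y" "\<forall>y\<in>#Y. empty_ann y"
    using ax prune_wf_items prune_empty_anns by blast+
  then show ?case unfolding Y by (rule deriv.ax)
next
  case (conj G1 G2 G A x B y)
  obtain G' where G': "Y = fill G' {#Fm (And A B)#}" "prune_ctx G G'"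
    using prune_fill_Fm[OF conj.prems] by blast
  then obtain G1' G2' where "merge_ctx G1' G2' G'" "prune_ctx G1 G1'" "prune_ctx G2 G2'"
    using merge_ctx_prune conj.hyps(1) by blast
  moreover from calculation(2,3) have "deriv CA (fill G1' {#x#})" "deriv CA (fill G2' {#y#})"
    using conj.IH prune_fill prune_refl by blast+
  ultimately show ?case unfolding G' using conj.hyps(2,3) by (blast intro: deriv.conj)
next
  case (disj A x B y G)
  obtain G' where G': "Y = fill G' {#Fm (Or A B)#}" "prune_ctx G G'"
    using prune_fill_Fm[OF disj.prems] by blast
  then have "deriv CA (fill G' {#x, y#})"
    using disj.IH prune_fill prune_refl by blast
  then show ?case unfolding G' using disj.hyps by (blast intro: deriv.disj)
next
  case (box A x G S)
  obtain G' where G': "Y = fill G' {#Fm (Box A)#}" "prune_ctx G G'"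
    using prune_fill_Fm[OF box.prems] by blast
  then have "deriv CA (fill G' {#Br {#Di (neg A) S, x#} A#})"
    using box.IH prune_fill prune_refl by blast
  then show ?case unfolding G' using box.hyps by (blast intro: deriv.box)
next
  case (dia A x G S D M B)
  obtain G' X' where "Y = fill G' X'" "prune_ctx G G'"
    and "prune (add_mset (Di A (finsert B S)) (fill D {#Br M B#})) X'"
    using prune_fill_split[OF dia.prems] by blast
  \<comment> \<open>the principal formula has a nonempty annotation, so it survives the pruning\<close>
  moreover from calculation(3) obtain X'' where "X' = add_mset (Di A (finsert B S)) X''"
    and "prune (fill D {#Br M B#}) X''"
    by (auto simp: prune_add_mset_iff)
  moreover from calculation(5) obtain D' Z where "X'' = fill D' Z" "prune_ctx D D'"
    and "prune {#Br M B#} Z"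
    using prune_fill_split by blast
  moreover from calculation(8) obtain M' where "Z = {#Br M' B#}" "prune M M'"
    by (auto simp: prune_add_mset_iff)
  ultimately have Y: "Y = fill G' (add_mset (Di A (finsert B S)) (fill D' {#Br M' B#}))"
    and "prune (fill G (add_mset (Di A S) (fill D {#Br (add_mset x M) B#})))
      (fill G' (add_mset (Di A S) (fill D' {#Br (add_mset x M') B#})))"
    by (auto intro!: prune_fill prune_add_mset prune_item_refl)
  with dia.IH have "deriv CA (fill G' (add_mset (Di A S) (fill D' {#Br (add_mset x M') B#})))"
    by blast
  then show ?case unfolding Y by (rule deriv.dia[OF dia.hyps(1)])
next
  case (cut G1 G2 G x y)
  obtain G' where G': "Y = fill G' {#}" "prune_ctx G G'"
    using prune_fill_split[OF cut.prems] by auto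
  then obtain G1' G2' where "merge_ctx G1' G2' G'" "prune_ctx G1 G1'" "prune_ctx G2 G2'"
    using merge_ctx_prune cut.hyps(1) by blast
  moreover from calculation(2,3) have "deriv CA (fill G1' {#x#})" "deriv CA (fill G2' {#y#})"
    using cut.IH prune_fill prune_refl by blast+
  ultimately show ?case unfolding G' using cut.hyps(2,3) by (blast intro: deriv.cut)
qed

theorem mainTheorem10:
  fixes A :: fm and G :: ctx
  assumes "deriv A (fill G {# Di (neg A) {||} #})"
  shows "\<exists>G'. erase_ctx G' = erase_ctx G \<and> deriv A (fill G' {#})"
proof -
  have "prune (fill G {# Di (neg A) {||} #}) (fill G {#})"
    by (rule prune_fill) (auto simp: prune_ctx_refl prune_add_mset_iff)
  with assms have "deriv A (fill G {#})" by (rule deriv_prune)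
  then show ?thesis by blast
qed

end
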